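(* Let $X$ be a real vector space. Then $(X,\tau_c)$ has the Heine–Borel property: every $\tau_c$-closed and $\tau_c$-bounded subset of $X$ is $\tau_c$-compact. Moreover, every $\tau_c$-compact subset of $X$ lies in some finite-dimensional subspace of $X$.
   Context: For $A\subseteq X$, $cor(A):=\{x\in A:\ \forall x'\in X\ \exists \lambda'>0 \text{ with } x+\lambda x'\in A\ \forall\lambda\in[0,\lambda']\}$. The core convex topology $\tau_c$ on $X$ is the topology whose open sets are the unions of families of convex sets $B\subseteq X$ with $cor(B)=B$; it makes $X$ a topological vector space. A set $A$ is $\tau_c$-bounded if for every $\tau_c$-neighborhood $U$ of $0$ there is $s>0$ with $A\subseteq tU$ for all $t>s$. *)

theory Defs
  imports "HOL-Analysis.Analysis"
begin

definition acore :: "'a::real_vector set \<Rightarrow> 'a set" where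
  "acore A = {x \<in> A. \<forall>x'. \<exists>l>0. \<forall>t\<in>{0..l}. x + t *\<^sub>R x' \<in> A}"

definition core_basic :: "'a::real_vector set \<Rightarrow> bool" where
  "core_basic B \<longleftrightarrow> convex B \<and> acore B = B"

definition core_open :: "'a::real_vector set \<Rightarrow> bool" where
  "core_open U \<longleftrightarrow> (\<exists>F. (\<forall>B\<in>F. core_basic B) \<and> U = \<Union>F)"

lemma acore_Int: "acore (A \<inter> B) = acore A \<inter> acore B"
proof
  show "acore (A \<inter> B) \<subseteq> acore A \<inter> acore B"
    unfolding acore_def by blast
next
  show "acore A \<inter> acore B \<subseteq> acore (A \<inter> B)"
  proof
    fix x assume x: "x \<in> acore A \<inter> acore B"
    have "\<exists>l>0. \<forall>t\<in>{0..l}. x + t *\<^sub>R x' \<in> A \<inter> B" for x'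
    proof -
      obtain l1 where l1: "l1 > 0" "\<forall>t\<in>{0..l1}. x + t *\<^sub>R x' \<in> A"
        using x unfolding acore_def by blast
      obtain l2 where l2: "l2 > 0" "\<forall>t\<in>{0..l2}. x + t *\<^sub>R x' \<in> B"
        using x unfolding acore_def by blast
      show ?thesis using l1 l2
        by (intro exI[of _ "min l1 l2"]) auto
    qed
    then show "x \<in> acore (A \<inter> B)" using x unfolding acore_def by auto
  qed
qed

lemma core_basic_Int: "core_basic A \<Longrightarrow> core_basic B \<Longrightarrow> core_basic (A \<inter> B)"
  unfolding core_basic_def using acore_Int convex_Int by metis

lemma core_open_Int:
  assumes "core_open S" "core_open T" shows "core_open (S \<inter> T)"
proof -
  obtain F where F: "\<forall>B\<in>F. core_basic B" "S = \<Union>F"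
    using assms(1) unfolding core_open_def by blast
  obtain G where G: "\<forall>B\<in>G. core_basic B" "T = \<Union>G"
    using assms(2) unfolding core_open_def by blast
  define H where "H = (\<lambda>(A, B). A \<inter> B) ` (F \<times> G)"
  have "\<forall>C\<in>H. core_basic C" unfolding H_def using F(1) G(1) core_basic_Int by auto
  moreover have "S \<inter> T = \<Union>H" unfolding H_def F(2) G(2) by auto
  ultimately show ?thesis unfolding core_open_def by blast
qed

lemma core_open_Union:
  assumes "\<forall>S\<in>K. core_open S" shows "core_open (\<Union>K)"
proof -
  have "\<forall>S\<in>K. \<exists>F. (\<forall>B\<in>F. core_basic B) \<and> S = \<Union>F"
    using assms unfolding core_open_def by blast
  then obtain f where f: "\<And>S. S \<in> K \<Longrightarrow> (\<forall>B\<in>f S. core_basic B) \<and> S = \<Union>(f S)"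
    by metis
  have "\<forall>B\<in>\<Union>(f ` K). core_basic B" using f by auto
  moreover have "\<Union>K = \<Union>(\<Union>(f ` K))"
  proof
    show "\<Union>K \<subseteq> \<Union>(\<Union>(f ` K))"
    proof
      fix x assume "x \<in> \<Union>K"
      then obtain S where "S \<in> K" "x \<in> S" by blast
      moreover have "S = \<Union>(f S)" using f[of S] \<open>S \<in> K\<close> by blast
      ultimately show "x \<in> \<Union>(\<Union>(f ` K))" by blast
    qed
    show "\<Union>(\<Union>(f ` K)) \<subseteq> \<Union>K"
    proof
      fix x assume "x \<in> \<Union>(\<Union>(f ` K))"
      then obtain S B where "S \<in> K" "B \<in> f S" "x \<in> B" by blast
      then show "x \<in> \<Union>K" using f[of S] by auto
    qed
  qed
  ultimately show ?thesis unfolding core_open_def by blast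
qed

lemma istopology_core_open: "istopology core_open"
  unfolding istopology_def using core_open_Int core_open_Union by blast

definition core_topology :: "'a::real_vector topology" where
  "core_topology = topology core_open"

lemma openin_core_topology: "openin core_topology U \<longleftrightarrow> core_open U"
  unfolding core_topology_def using istopology_core_open topology_inverse' by metis

definition core_bounded :: "'a::real_vector set \<Rightarrow> bool" where
  "core_bounded A \<longleftrightarrow>
     (\<forall>U. (\<exists>V. openin core_topology V \<and> 0 \<in> V \<and> V \<subseteq> U) \<longrightarrow>
          (\<exists>s>0. \<forall>t>s. A \<subseteq> (\<lambda>x. t *\<^sub>R x) ` U))"

end

theory Submission
  imports Defs
begin

text \<open>For a linear functional \<open>f\<close> the half-spaces \<open>{f < c}\<close> are \<open>\<tau>\<^sub>c\<close>-open, so every linear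
  functional is bounded on a \<open>\<tau>\<^sub>c\<close>-compact or a \<open>\<tau>\<^sub>c\<close>-bounded set. This confines such a set to
  the span of a finite independent set \<open>B\<close>: an infinite independent family \<open>h 0, h 1, \<dots>\<close> carries a
  linear functional with \<open>h n \<mapsto> n\<close>. On that span the coordinate map \<open>\<real>\<^sup>B \<rightarrow> X\<close> is
  \<open>\<tau>\<^sub>c\<close>-continuous, because a point in the core of a convex set can be moved by any sufficiently
  small combination of the finitely many vectors of \<open>B\<close>. A closed bounded set is then the image
  of a closed subset of a compact box of coordinates.\<close>

lemma core_basic_UNIV: "core_basic (UNIV :: 'a::real_vector set)"
  unfolding core_basic_def acore_def by (auto intro: exI[of _ 1])

lemma topspace_core_topology: "topspace (core_topology :: 'a::real_vector topology) = UNIV"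
  using core_basic_UNIV openin_subset[of core_topology UNIV]
  unfolding openin_core_topology core_open_def by blast

lemma core_basic_halfspace_lt:
  fixes f :: "'a::real_vector \<Rightarrow> real"
  assumes f: "linear f"
  shows "core_basic {x. f x < c}"
  unfolding core_basic_def
proof
  have "{x. f x < c} = f -` {..<c}" by auto
  then show "convex {x. f x < c}"
    using convex_linear_vimage[OF f convex_real_interval(4)] by simp
  have "x \<in> acore {x. f x < c}" if x: "f x < c" for x
  proof -
    have "\<exists>l>0. \<forall>t\<in>{0..l}. f (x + t *\<^sub>R v) < c" for v
    proof (intro exI[of _ "(c - f x) / (\<bar>f v\<bar> + 1)"] conjI ballI)
      show "(c - f x) / (\<bar>f v\<bar> + 1) > 0" using x by simp
      fix t assume t: "t \<in> {0..(c - f x) / (\<bar>f v\<bar> + 1)}"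
      then have "t * \<bar>f v\<bar> + t \<le> c - f x"
        by (simp add: pos_le_divide_eq algebra_simps)
      moreover have "t * f v \<le> t * \<bar>f v\<bar>" using t by (intro mult_left_mono) auto
      ultimately have "f x + t * f v \<le> c - t" by linarith
      moreover have "f (x + t *\<^sub>R v) = f x + t * f v"
        using linear_add[OF f] linear_scale[OF f] by simp
      ultimately show "f (x + t *\<^sub>R v) < c"
        using x t by (cases "t = 0") auto
    qed
    then show ?thesis using x unfolding acore_def by auto
  qed
  then show "acore {x. f x < c} = {x. f x < c}"
    unfolding acore_def by auto
qed

lemma openin_core_topology_halfspace_lt:
  fixes f :: "'a::real_vector \<Rightarrow> real"
  assumes "linear f"
  shows "openin core_topology {x. f x < c}"
  unfolding openin_core_topology core_open_def
  using core_basic_halfspace_lt[OF assms] by (intro exI[of _ "{{x. f x < c}}"]) auto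

lemma compactin_core_topology_linear_bounded_above:
  fixes f :: "'a::real_vector \<Rightarrow> real"
  assumes K: "compactin core_topology K" and f: "linear f"
  shows "\<exists>M. \<forall>x\<in>K. f x \<le> M"
proof -
  let ?H = "\<lambda>n::nat. {x. f x < real n}"
  have "\<forall>U\<in>range ?H. openin core_topology U"
    using openin_core_topology_halfspace_lt[OF f] by auto
  moreover have "K \<subseteq> \<Union>(range ?H)"
    using reals_Archimedean2 by blast
  ultimately obtain F where "finite F" "F \<subseteq> range ?H" "K \<subseteq> \<Union>F"
    using K unfolding compactin_def by meson
  then obtain N where N: "finite N" "K \<subseteq> (\<Union>n\<in>N. ?H n)"
    using finite_subset_image[of F ?H UNIV] by blast
  have "f x \<le> real (Max (insert 0 N))" if "x \<in> K" for x
  proof -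
    obtain n where "n \<in> N" "f x < real n" using N \<open>x \<in> K\<close> by blast
    moreover have "n \<le> Max (insert 0 N)" using N(1) \<open>n \<in> N\<close> by simp
    ultimately show ?thesis by linarith
  qed
  then show ?thesis by blast
qed

lemma core_bounded_linear_bounded:
  fixes f :: "'a::real_vector \<Rightarrow> real"
  assumes A: "core_bounded A" and f: "linear f"
  shows "\<exists>M. \<forall>x\<in>A. \<bar>f x\<bar> \<le> M"
proof -
  define U where "U = {x. f x < 1} \<inter> {x. - f x < 1}"
  have "openin core_topology U"
    unfolding U_def using f linear_compose_neg[OF f]
    by (intro openin_Int openin_core_topology_halfspace_lt) auto
  moreover have "0 \<in> U" unfolding U_def using linear_0[OF f] by simp
  ultimately obtain s where s: "s > 0" "\<forall>t>s. A \<subseteq> (\<lambda>x. t *\<^sub>R x) ` U"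
    using A unfolding core_bounded_def by blast
  have "\<bar>f x\<bar> \<le> s + 1" if "x \<in> A" for x
  proof -
    obtain u where u: "u \<in> U" "x = (s + 1) *\<^sub>R u" using s \<open>x \<in> A\<close> by force
    then have "\<bar>f x\<bar> = (s + 1) * \<bar>f u\<bar>"
      using s linear_scale[OF f] by (simp add: abs_mult)
    moreover have "\<bar>f u\<bar> < 1" using u unfolding U_def by auto
    ultimately show ?thesis using s by simp
  qed
  then show ?thesis by blast
qed

lemma finite_span_if_linear_bounded_above:
  fixes K :: "'a::real_vector set"
  assumes bounded: "\<And>f. linear f \<Longrightarrow> \<exists>M. \<forall>x\<in>K. (f x :: real) \<le> M"
  shows "\<exists>B. finite B \<and> independent B \<and> K \<subseteq> span B"
proof -
  obtain B where B: "B \<subseteq> K" "independent B" "K \<subseteq> span B"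
    using maximal_independent_subset by blast
  have "finite B"
  proof (rule ccontr)
    assume "infinite B"
    then obtain h :: "nat \<Rightarrow> 'a" where h: "inj h" "range h \<subseteq> B"
      using infinite_countable_subset by blast
    obtain g where g: "linear g" "\<forall>x\<in>B. g x = (if x \<in> range h then real (inv h x) else 0)"
      using linear_independent_extend[OF B(2), of "\<lambda>x. if x \<in> range h then real (inv h x) else 0"]
      by blast
    obtain M where M: "\<forall>x\<in>K. g x \<le> M" using bounded[OF g(1)] by blast
    obtain n :: nat where "M < real n" using reals_Archimedean2 by blast
    moreover have "h n \<in> B" using h by auto
    then have "h n \<in> K" and "g (h n) = real n"
      using B(1) g(2) inv_f_f[OF h(1)] by auto
    ultimately show False using M by fastforce
  qed
  then show ?thesis using B by blast
qed

lemma compactin_core_topology_finite_span: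
  fixes K :: "'a::real_vector set"
  assumes "compactin core_topology K"
  shows "\<exists>B. finite B \<and> independent B \<and> K \<subseteq> span B"
  using finite_span_if_linear_bounded_above compactin_core_topology_linear_bounded_above[OF assms]
  by blast

lemma core_bounded_finite_span:
  fixes A :: "'a::real_vector set"
  assumes "core_bounded A"
  shows "\<exists>B. finite B \<and> independent B \<and> A \<subseteq> span B"
proof (rule finite_span_if_linear_bounded_above)
  fix f :: "'a \<Rightarrow> real"
  assume "linear f"
  then obtain M where "\<forall>x\<in>A. \<bar>f x\<bar> \<le> M"
    using core_bounded_linear_bounded[OF assms] by blast
  then show "\<exists>M. \<forall>x\<in>A. f x \<le> M" by (auto dest: abs_le_D1)
qed

lemma core_bounded_representation_bounded:
  fixes A :: "'a::real_vector set"
  assumes A: "core_bounded A" and B: "independent B" "A \<subseteq> span B"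
  shows "\<exists>M. \<forall>x\<in>A. \<bar>representation B x b\<bar> \<le> M"
proof -
  \<comment> \<open>\<open>representation B\<close> vanishes off \<open>span B\<close>, so it is not linear; the coordinates with
    respect to a basis extending \<open>B\<close> are, and they agree with it on \<open>span B\<close>.\<close>
  let ?E = "extend_basis B"
  have "Vector_Spaces.linear (*\<^sub>R) (*) (\<lambda>x. representation ?E x b)"
    using B(1) by (intro real_vector.linear_representation independent_extend_basis) auto
  then have "linear (\<lambda>x. representation ?E x b)"
    unfolding linear_def real_scaleR_def[abs_def] .
  moreover have "representation ?E x = representation B x" if "x \<in> A" for x
    using B that by (intro representation_extend independent_extend_basis extend_basis_superset) auto
  ultimately show ?thesis using core_bounded_linear_bounded[OF A] by metis
qed

lemma convex_acore_small_combination: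
  fixes V :: "'a::real_vector set"
  assumes V: "convex V" and p: "p \<in> acore V" and B: "finite B"
  shows "\<exists>e>0. \<forall>d. (\<forall>b\<in>B. \<bar>d b\<bar> < e) \<longrightarrow> p + (\<Sum>b\<in>B. d b *\<^sub>R b) \<in> V"
  using B
proof (induction B rule: finite_induct)
  case empty
  then show ?case using p unfolding acore_def by (auto intro: exI[of _ 1])
next
  case (insert a B)
  obtain e where e: "e > 0" "\<forall>d. (\<forall>b\<in>B. \<bar>d b\<bar> < e) \<longrightarrow> p + (\<Sum>b\<in>B. d b *\<^sub>R b) \<in> V"
    using insert.IH by blast
  obtain l1 where l1: "l1 > 0" "\<forall>t\<in>{0..l1}. p + t *\<^sub>R a \<in> V"
    using p unfolding acore_def by blast
  obtain l2 where l2: "l2 > 0" "\<forall>t\<in>{0..l2}. p + t *\<^sub>R (- a) \<in> V"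
    using p unfolding acore_def by blast
  define l where "l = min l1 l2"
  have segment: "p + s *\<^sub>R a \<in> V" if "\<bar>s\<bar> \<le> l" for s
  proof (cases "s \<ge> 0")
    case True
    then show ?thesis using l1 that unfolding l_def by auto
  next
    case False
    then have "- s \<in> {0..l2}" using that unfolding l_def by auto
    then show ?thesis using l2 by fastforce
  qed
  show ?case
  proof (intro exI[of _ "min (l/2) (e/2)"] conjI allI impI)
    show "min (l/2) (e/2) > 0" using l1 l2 e unfolding l_def by auto
    fix d assume d: "\<forall>b\<in>insert a B. \<bar>d b\<bar> < min (l/2) (e/2)"
    \<comment> \<open>The required point is the midpoint of \<open>p + 2 d\<^sub>a a\<close> and \<open>p + \<Sum>\<^sub>b 2 d\<^sub>b b\<close>.\<close>
    have "p + (2 * d a) *\<^sub>R a \<in> V" using d by (intro segment) auto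
    moreover have "p + (\<Sum>b\<in>B. (2 * d b) *\<^sub>R b) \<in> V"
      using d by (intro e(2)[rule_format]) (auto simp: abs_mult)
    ultimately have "(1/2) *\<^sub>R (p + (2 * d a) *\<^sub>R a) + (1/2) *\<^sub>R (p + (\<Sum>b\<in>B. (2 * d b) *\<^sub>R b)) \<in> V"
      by (intro convexD[OF V]) auto
    also have "(1/2) *\<^sub>R (p + (2 * d a) *\<^sub>R a) + (1/2) *\<^sub>R (p + (\<Sum>b\<in>B. (2 * d b) *\<^sub>R b))
        = p + (\<Sum>b\<in>insert a B. d b *\<^sub>R b)"
    proof -
      have "(1/2::real) *\<^sub>R p + (1/2) *\<^sub>R p = p" by (simp flip: scaleR_add_left)
      then show ?thesis using insert.hyps by (simp add: scaleR_sum_right algebra_simps)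
    qed
    finally show "p + (\<Sum>b\<in>insert a B. d b *\<^sub>R b) \<in> V" .
  qed
qed

lemma continuous_map_core_topology_linear_combination:
  fixes B :: "'a::real_vector set"
  assumes B: "finite B"
  shows "continuous_map (product_topology (\<lambda>_. euclideanreal) B) core_topology
           (\<lambda>c. \<Sum>b\<in>B. c b *\<^sub>R b)"
  unfolding continuous_map_def topspace_core_topology
proof (intro conjI allI impI)
  let ?P = "product_topology (\<lambda>_::'a. euclideanreal) B"
  let ?L = "\<lambda>c. \<Sum>b\<in>B. c b *\<^sub>R b"
  show "?L \<in> topspace ?P \<rightarrow> UNIV" by simp
  fix U :: "'a set" assume "openin core_topology U"
  then obtain F where F: "\<forall>V\<in>F. core_basic V" "U = \<Union>F"
    unfolding openin_core_topology core_open_def by blast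
  show "openin ?P {c \<in> topspace ?P. ?L c \<in> U}"
  proof (subst openin_subopen, intro ballI)
    fix c assume c: "c \<in> {c \<in> topspace ?P. ?L c \<in> U}"
    then obtain V where V: "V \<in> F" "?L c \<in> V" using F(2) by auto
    moreover have "core_basic V" using F(1) V(1) by blast
    ultimately obtain e where e: "e > 0" "\<forall>d. (\<forall>b\<in>B. \<bar>d b\<bar> < e) \<longrightarrow> ?L c + ?L d \<in> V"
      using convex_acore_small_combination[of V "?L c" B] B unfolding core_basic_def by auto
    define T where "T = PiE B (\<lambda>b. ball (c b) e)"
    have "openin ?P T" unfolding T_def openin_PiE_gen using B by auto
    moreover have "c \<in> T" unfolding T_def using c e by (auto simp: PiE_iff)
    moreover have "T \<subseteq> {c \<in> topspace ?P. ?L c \<in> U}"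
    proof
      fix c' assume c': "c' \<in> T"
      then have "\<forall>b\<in>B. \<bar>c' b - c b\<bar> < e"
        unfolding T_def by (auto simp: PiE_iff dist_real_def abs_minus_commute)
      then have "?L c + ?L (\<lambda>b. c' b - c b) \<in> V"
        using e(2)[rule_format, of "\<lambda>b. c' b - c b"] by blast
      moreover have "?L c + ?L (\<lambda>b. c' b - c b) = ?L c'"
        by (simp add: scaleR_diff_left sum_subtractf)
      moreover have "c' \<in> topspace ?P" using c' unfolding T_def by (auto simp: PiE_iff)
      ultimately show "c' \<in> {c \<in> topspace ?P. ?L c \<in> U}" using V F(2) by auto
    qed
    ultimately show "\<exists>T. openin ?P T \<and> c \<in> T \<and> T \<subseteq> {c \<in> topspace ?P. ?L c \<in> U}"
      by blast
  qed
qed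

lemma compactin_core_topology_closed_finite_span:
  fixes A :: "'a::real_vector set"
  assumes A: "closedin core_topology A" and B: "finite B" "independent B" "A \<subseteq> span B"
    and coordinates_bounded: "\<And>b. \<exists>M. \<forall>x\<in>A. \<bar>representation B x b\<bar> \<le> M"
  shows "compactin core_topology A"
proof -
  obtain S where S: "\<And>b x. x \<in> A \<Longrightarrow> \<bar>representation B x b\<bar> \<le> S b"
    using coordinates_bounded by metis
  let ?P = "product_topology (\<lambda>_::'a. euclideanreal) B"
  let ?L = "\<lambda>c. \<Sum>b\<in>B. c b *\<^sub>R b"
  let ?box = "PiE B (\<lambda>b. {-S b..S b})"
  define C where "C = ?box \<inter> {c \<in> topspace ?P. ?L c \<in> A}"
  have L: "continuous_map ?P core_topology ?L"
    using continuous_map_core_topology_linear_combination[OF B(1)] .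
  have "closedin ?P C"
    unfolding C_def using closedin_continuous_map_preimage[OF L A]
    by (intro closedin_Int) (simp_all add: closedin_product_topology flip: closed_closedin)
  then have "compactin ?P C"
    using closed_compactin[of ?P ?box C] by (simp add: compactin_PiE C_def)
  then have "compactin core_topology (?L ` C)"
    using image_compactin[OF _ L] by blast
  moreover have "?L ` C = A"
  proof
    show "?L ` C \<subseteq> A" unfolding C_def by auto
    show "A \<subseteq> ?L ` C"
    proof
      fix x assume x: "x \<in> A"
      let ?c = "restrict (representation B x) B"
      have "x \<in> span B" using x B(3) by auto
      then have "?L ?c = x"
        using sum_representation_eq[of B x B] B(1,2) by simp
      moreover have "?c \<in> C"
        using S[OF x] x \<open>?L ?c = x\<close> unfolding C_def by (force simp: abs_le_iff)
      ultimately show "x \<in> ?L ` C" by force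
    qed
  qed
  ultimately show ?thesis by simp
qed

theorem theorem3p16:
  fixes A K :: "'a::real_vector set"
  shows "(closedin core_topology A \<and> core_bounded A \<longrightarrow> compactin core_topology A)
     \<and> (compactin core_topology K \<longrightarrow> (\<exists>B. finite B \<and> K \<subseteq> span B))"
proof (intro conjI impI)
  assume "closedin core_topology A \<and> core_bounded A"
  then have closed: "closedin core_topology A" and bounded: "core_bounded A" by auto
  obtain B where B: "finite B" "independent B" "A \<subseteq> span B"
    using core_bounded_finite_span[OF bounded] by blast
  show "compactin core_topology A"
    using compactin_core_topology_closed_finite_span[OF closed B]
      core_bounded_representation_bounded[OF bounded B(2,3)] by blast
next
  assume "compactin core_topology K"
  then show "\<exists>B. finite B \<and> K \<subseteq> span B"
    using compactin_core_topology_finite_span by blast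
qed

end
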